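(* Let $n$ and $m$ be positive odd integers and $a>0$. Then \[ \int_{-a}^{1}\frac{\sin\bigl(n\sin^{-1}\sqrt t\bigr)\sinh\bigl(m\sinh^{-1}\sqrt{t/a}\bigr)}{\rho_a(t)}\,\frac{t^j\,dt}{\sqrt{(1-t)(1+t/a)}}=\begin{cases}\pi/2,& j=-1,\\ 0,& j=0,1,\ldots,\frac{m+n-2}{2},\end{cases} \] and \[ \int_{-a}^{1}\frac{\cos\bigl(n\sin^{-1}\sqrt t\bigr)\cosh\bigl(m\sinh^{-1}\sqrt{t/a}\bigr)}{\rho_a(t)}\,t^j\,dt=0,\qquad j=0,1,\ldots,\tfrac{m+n-4}{2}. \]
   Context: $\rho_a(t)=\cos\bigl(2n\sin^{-1}\sqrt t\bigr)+\cosh\bigl(2m\sinh^{-1}\sqrt{t/a}\bigr)=T_n(1-2t)+T_m(1+2t/a)$ for $t\in[-a,1]$, where $T_k(\cos\theta)=\cos k\theta$ is the Chebyshev polynomial of the first kind; it is positive on $[-a,1]$. Convention for negative arguments: for $t<0$, $\sqrt t:=i\sqrt{-t}$, $\sin^{-1}(iy):=i\sinh^{-1}y$ ($y\ge0$), $\sinh^{-1}(iy):=i\sin^{-1}y$ ($0\le y\le1$); with this convention all integrands are real. *)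

theory Defs
  imports "HOL-Analysis.Analysis"
begin

text \<open>The paper's integrands, with its convention for negative arguments written out:
for t < 0, sqrt t = i sqrt(-t), arcsin(i y) = i arsinh y, arsinh(i y) = i arcsin y.
Hence for t < 0:
  sin(n asin sqrt t) sinh(m asinh sqrt(t/a)) = (i sinh(n asinh sqrt(-t))) (i sin(m asin sqrt(-t/a))),
  cos(n asin sqrt t) cosh(m asinh sqrt(t/a)) = cosh(n asinh sqrt(-t)) cos(m asin sqrt(-t/a)).\<close>

definition SS :: "nat \<Rightarrow> nat \<Rightarrow> real \<Rightarrow> real \<Rightarrow> real" where
  "SS n m a t = (if 0 \<le> t
     then sin (real n * arcsin (sqrt t)) * sinh (real m * arsinh (sqrt (t / a)))
     else - (sinh (real n * arsinh (sqrt (- t))) * sin (real m * arcsin (sqrt (- t / a)))))"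

definition CC :: "nat \<Rightarrow> nat \<Rightarrow> real \<Rightarrow> real \<Rightarrow> real" where
  "CC n m a t = (if 0 \<le> t
     then cos (real n * arcsin (sqrt t)) * cosh (real m * arsinh (sqrt (t / a)))
     else cosh (real n * arsinh (sqrt (- t))) * cos (real m * arcsin (sqrt (- t / a))))"

definition rho :: "nat \<Rightarrow> nat \<Rightarrow> real \<Rightarrow> real \<Rightarrow> real" where
  "rho n m a t = (if 0 \<le> t
     then cos (2 * real n * arcsin (sqrt t)) + cosh (2 * real m * arsinh (sqrt (t / a)))
     else cosh (2 * real n * arsinh (sqrt (- t))) + cos (2 * real m * arcsin (sqrt (- t / a))))"

end

(*
  Write n = 2k+1 and m = 2l+1.  The multiple-angle formulas for sin, cos, sinh, cosh express
  the integrands through two polynomials in t, products of Chebyshev polynomials of the third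
  and fourth kind: SS = t Y(t) / sqrt a, CC = sqrt ((1 - t) (1 + t/a)) X(t), and
  rho = 2 (SS^2 + CC^2).  The substitution t = (1-a)/2 + (1+a)/2 cos theta, 0 < theta < pi,
  is the restriction to the upper unit half-circle of a Joukowski map w |-> tau(w)/w.  On the
  circle the substituted integrands are real parts of rational functions P(w) / Q(w), where
  Q(w) = w^(k+l+1) (t Y(t) - i p X(t)) with p = (1+a)/2 sin theta, so |Q|^2 = a rho(t) / 2.
  The polynomial Q has no zeros in the closed unit disc: on the circle because rho > 0, and
  inside because a Cayley transform and the closed forms of the Chebyshev polynomials reduce
  Q(w) = 0 to q1^(2k+1) q2^(2l+1) = -1 with |q1|, |q2| < 1.  By the mean value property each
  integral is a constant multiple of Re (P(0) / Q(0)); this vanishes when the bounds on j force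
  P(0) = 0, and it gives pi/2 for the weight 1/t.
*)
theory Submission
  imports Defs "HOL-Complex_Analysis.Complex_Analysis"
begin

section \<open>Substituting \<open>t = c + r cos \<theta>\<close> and the mean value property\<close>

lemma has_integral_half_of_symmetric:
  fixes h :: "real \<Rightarrow> real"
  assumes "a \<le> b" and cont: "continuous_on {a..b} h"
    and sym: "\<And>x. x \<in> {a..b} \<Longrightarrow> h (a + b - x) = h x"
    and I: "(h has_integral I) {a..b}"
  shows "(h has_integral I / 2) {a..(a + b) / 2}"
proof -
  have "h integrable_on {a..(a + b) / 2}"
    by (rule integrable_continuous_interval, rule continuous_on_subset[OF cont]) auto
  then obtain J where J: "(h has_integral J) {a..(a + b) / 2}"
    by blast
  then have "((\<lambda>x. h (- x)) has_integral J) {- ((a + b) / 2)..- a}"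
    by simp
  from has_integral_shift_real_ivl[OF this, of "- (a + b)"]
  have "((\<lambda>x. h (a + b - x)) has_integral J) {a + b - (a + b) / 2..b}"
    by (simp add: algebra_simps)
  moreover have "a + b - (a + b) / 2 = (a + b) / 2"
    by (simp add: field_simps)
  ultimately have "((\<lambda>x. h (a + b - x)) has_integral J) {(a + b) / 2..b}"
    by simp
  then have "(h has_integral J) {(a + b) / 2..b}"
    by (rule has_integral_eq[rotated]) (use sym \<open>a \<le> b\<close> in \<open>auto simp: algebra_simps\<close>)
  with J have "(h has_integral J + J) {a..b}"
    by (intro has_integral_combine) (use \<open>a \<le> b\<close> in auto)
  with I have "I = J + J"
    by (rule has_integral_unique)
  with J show ?thesis
    by simp
qed

lemma has_integral_Diff_finite:
  fixes f :: "'n::euclidean_space \<Rightarrow> 'a::banach"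
  assumes "finite T"
  shows "(f has_integral I) (S - T) \<longleftrightarrow> (f has_integral I) S"
  by (rule has_integral_spike_set_eq)
     (auto intro: negligible_subset[OF negligible_finite[OF assms]])

lemma inj_on_cos_param:
  assumes "r \<noteq> 0"
  shows "inj_on (\<lambda>\<theta>. c + r * cos \<theta>) {0<..<pi}"
proof (rule inj_onI)
  fix x y :: real
  assume "x \<in> {0<..<pi}" "y \<in> {0<..<pi}" "c + r * cos x = c + r * cos y"
  with assms show "x = y"
    using cos_inj_pi[of x y] by simp
qed

lemma cos_param_image:
  assumes "r > 0"
  shows "(\<lambda>\<theta>. c + r * cos \<theta>) ` {0<..<pi} = {c - r<..<c + r}"
proof
  have "- r < r * cos \<theta> \<and> r * cos \<theta> < r" if "\<theta> \<in> {0<..<pi}" for \<theta>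
  proof -
    have "- 1 < cos \<theta>" "cos \<theta> < 1"
      using that cos_monotone_0_pi[of \<theta> pi] cos_monotone_0_pi[of 0 \<theta>] by auto
    then show ?thesis
      using mult_strict_left_mono[of _ _ r] assms by fastforce
  qed
  then show "(\<lambda>\<theta>. c + r * cos \<theta>) ` {0<..<pi} \<subseteq> {c - r<..<c + r}"
    by force
  show "{c - r<..<c + r} \<subseteq> (\<lambda>\<theta>. c + r * cos \<theta>) ` {0<..<pi}"
  proof
    fix t assume "t \<in> {c - r<..<c + r}"
    then have bounds: "- 1 < (t - c) / r" "(t - c) / r < 1"
      using assms by (auto simp: field_simps)
    then have "arccos ((t - c) / r) \<in> {0<..<pi}" "t = c + r * cos (arccos ((t - c) / r))"
      using arccos_lt_bounded[OF bounds] assms by auto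
    then show "t \<in> (\<lambda>\<theta>. c + r * cos \<theta>) ` {0<..<pi}"
      by blast
  qed
qed

lemma has_integral_cos_substitution:
  fixes f h :: "real \<Rightarrow> real"
  assumes r: "r > 0" and T: "finite T"
    and h_cont: "continuous_on {0..pi} h" and h_int: "(h has_integral I) {0..pi}"
    and fh: "\<And>\<theta>. \<theta> \<in> {0<..<pi} \<Longrightarrow> c + r * cos \<theta> \<notin> T \<Longrightarrow>
               r * sin \<theta> * f (c + r * cos \<theta>) = h \<theta>"
  shows "(f has_integral I) {c - r..c + r}"
proof -
  define g where "g \<theta> = c + r * cos \<theta>" for \<theta>
  define E where "E = {0, pi} \<union> (g -` T \<inter> {0<..<pi})"
  have E: "finite E"
    unfolding E_def g_def using finite_vimage_IntI[OF T inj_on_cos_param] r by simp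
  define S where "S = {0..pi} - E"
  have S_leb: "S \<in> sets lebesgue"
    unfolding S_def using E by (intro sets.Diff) (auto intro: negligible_imp_sets)
  have S_alt: "S = {0<..<pi} - g -` T"
    by (auto simp: S_def E_def)
  have inj: "inj_on g S"
    unfolding S_alt g_def by (rule inj_on_subset[OF inj_on_cos_param]) (use r in auto)
  have "g ` S = g ` {0<..<pi} - T"
    by (auto simp: S_alt)
  also have "g ` {0<..<pi} = {c - r<..<c + r}"
    unfolding g_def by (rule cos_param_image[OF r])
  also have "{c - r<..<c + r} - T = {c - r..c + r} - ({c - r, c + r} \<union> T)"
    by auto
  finally have g_S: "g ` S = {c - r..c + r} - ({c - r, c + r} \<union> T)" .
  have g_deriv: "(g has_field_derivative - (r * sin \<theta>)) (at \<theta> within S)" for \<theta>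
    unfolding g_def by (auto intro!: derivative_eq_intros)
  have h_eq: "\<bar>r * sin \<theta>\<bar> * f (g \<theta>) = h \<theta>" if "\<theta> \<in> S" for \<theta>
    using that fh[of \<theta>] r sin_gt_zero[of \<theta>] by (simp add: S_alt g_def)
  have h_int_S: "(h has_integral I) S"
    unfolding S_def using h_int E by (simp add: has_integral_Diff_finite)
  have "h absolutely_integrable_on S"
    using absolutely_integrable_continuous_real[OF h_cont] S_leb
    by (rule set_integrable_subset) (auto simp: S_def)
  then have "(\<lambda>\<theta>. \<bar>r * sin \<theta>\<bar> * f (g \<theta>)) absolutely_integrable_on S"
    by (subst set_integrable_cong) (auto simp: h_eq)
  moreover have "integral S (\<lambda>\<theta>. \<bar>r * sin \<theta>\<bar> * f (g \<theta>)) = I"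
    using integral_unique[OF h_int_S] by (subst integral_cong) (auto simp: h_eq)
  ultimately have "f absolutely_integrable_on g ` S \<and> integral (g ` S) f = I"
    using has_absolute_integral_change_of_variables_1'[OF S_leb g_deriv inj, of f I] by simp
  then have "(f has_integral I) (g ` S)"
    using set_lebesgue_integral_eq_integral(1) has_integral_integrable_integral by blast
  then show ?thesis
    unfolding g_S using T by (simp add: has_integral_Diff_finite)
qed

lemma continuous_on_circle_holomorphic:
  assumes "\<Phi> holomorphic_on cball 0 1"
  shows "continuous_on A (\<lambda>\<theta>. \<Phi> (cis \<theta>))"
proof -
  have "continuous_on (sphere 0 1) \<Phi>"
    by (rule holomorphic_on_imp_continuous_on, rule holomorphic_on_subset[OF assms sphere_cball])
  then show ?thesis
    by (rule continuous_on_compose2[OF _ continuous_on_cis[OF continuous_on_id]]) auto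
qed

lemma has_integral_Re_half_circle:
  fixes \<Phi> :: "complex \<Rightarrow> complex"
  assumes hol: "\<Phi> holomorphic_on cball 0 1"
    and sym: "\<And>w. norm w = 1 \<Longrightarrow> \<Phi> (cnj w) = cnj (\<Phi> w)"
  shows "((\<lambda>\<theta>. Re (\<Phi> (cis \<theta>))) has_integral pi * Re (\<Phi> 0)) {0..pi}"
proof -
  have contour:
    "((\<lambda>u. \<Phi> u / (u - 0)) has_contour_integral 2 * of_real pi * \<i> * \<Phi> 0) (circlepath 0 1)"
    by (rule Cauchy_integral_circlepath_simple[OF hol]) simp
  have "((\<lambda>\<theta>. \<Phi> (cis \<theta>) * \<i>) has_integral 2 * of_real pi * \<i> * \<Phi> 0) {0..2 * pi}"
    using has_contour_integral_part_circlepath_iff[THEN iffD1,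
        OF _ contour[unfolded circlepath_def]]
    by simp
  from has_integral_mult_left[OF this, of "- \<i>"]
  have "((\<lambda>\<theta>. \<Phi> (cis \<theta>)) has_integral 2 * pi * \<Phi> 0) {0..2 * pi}"
    by (simp add: algebra_simps)
  from has_integral_Re[OF this]
  have full: "((\<lambda>\<theta>. Re (\<Phi> (cis \<theta>))) has_integral 2 * pi * Re (\<Phi> 0)) {0..2 * pi}"
    by simp
  have cont: "continuous_on {0..2 * pi} (\<lambda>\<theta>. Re (\<Phi> (cis \<theta>)))"
    using continuous_on_circle_holomorphic[OF hol] by (rule continuous_on_Re)
  have "cis (2 * pi - \<theta>) = cnj (cis \<theta>)" for \<theta>
    by (simp add: complex_eq_iff cos_diff sin_diff)
  then have "Re (\<Phi> (cis (0 + 2 * pi - \<theta>))) = Re (\<Phi> (cis \<theta>))" for \<theta>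
    using sym[of "cis \<theta>"] by simp
  from has_integral_half_of_symmetric[OF _ cont this full]
  show ?thesis
    by simp
qed

corollary has_integral_cos_substitution_holomorphic:
  fixes f :: "real \<Rightarrow> real" and \<Phi> :: "complex \<Rightarrow> complex"
  assumes "r > 0" "finite T" "\<Phi> holomorphic_on cball 0 1"
    and "\<And>w. norm w = 1 \<Longrightarrow> \<Phi> (cnj w) = cnj (\<Phi> w)"
    and "\<And>\<theta>. \<theta> \<in> {0<..<pi} \<Longrightarrow> c + r * cos \<theta> \<notin> T \<Longrightarrow>
           r * sin \<theta> * f (c + r * cos \<theta>) = Re (\<Phi> (cis \<theta>))"
  shows "(f has_integral pi * Re (\<Phi> 0)) {c - r..c + r}"
proof (rule has_integral_cos_substitution)
  show "continuous_on {0..pi} (\<lambda>\<theta>. Re (\<Phi> (cis \<theta>)))"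
    using continuous_on_circle_holomorphic[OF assms(3)] by (rule continuous_on_Re)
  show "((\<lambda>\<theta>. Re (\<Phi> (cis \<theta>))) has_integral pi * Re (\<Phi> 0)) {0..pi}"
    using assms(3,4) by (rule has_integral_Re_half_circle)
qed (use assms in auto)

lemma Re_csqrt_pos:
  assumes "Im z \<noteq> 0 \<or> Re z > 0"
  shows "Re (csqrt z) > 0"
proof (rule ccontr)
  assume "\<not> Re (csqrt z) > 0"
  define b where "b = Im (csqrt z)"
  have "csqrt z = of_real b * \<i>"
    using Re_csqrt[of z] \<open>\<not> Re (csqrt z) > 0\<close> by (simp add: complex_eq_iff b_def)
  then have "z = - of_real (b^2)"
    using power2_csqrt[of z] by (simp add: power_mult_distrib)
  with assms show False
    by auto
qed

lemma norm_diff_less_norm_add_iff: "norm (u - v) < norm (u + v) \<longleftrightarrow> Re (u * cnj v) > 0"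
proof -
  have "(norm (u + v))^2 - (norm (u - v))^2 = 4 * Re (u * cnj v)"
    by (simp only: cmod_power2) (simp add: power2_eq_square algebra_simps)
  moreover have "norm (u - v) < norm (u + v) \<longleftrightarrow> (norm (u - v))^2 < (norm (u + v))^2"
    by (auto intro: power2_less_imp_less power_strict_mono)
  ultimately show ?thesis
    by linarith
qed

lemma Re_mult_cnj_pos:
  fixes s1 s2 :: complex
  assumes "Re s1 > 0" "Re s2 > 0" "a > 0" "b > 0" and sum: "s2^2 + of_real a * s1^2 = of_real b"
  shows "Re (s1 * cnj s2) > 0"
proof -
  define x1 y1 x2 y2 where "x1 = Re s1" "y1 = Im s1" "x2 = Re s2" "y2 = Im s2"
  have im: "x2 * y2 = - a * x1 * y1" and re: "a * (x1^2 - y1^2) + x2^2 - y2^2 > 0"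
    using arg_cong[OF sum, of Im] arg_cong[OF sum, of Re] assms(4)
    by (simp_all add: x1_y1_x2_y2_def Re_power2 Im_power2 algebra_simps)
  have "x1 * x2 + y1 * y2 > 0"
  proof (rule ccontr)
    assume "\<not> x1 * x2 + y1 * y2 > 0"
    then have "x1 * x2 * x2 \<le> - y1 * y2 * x2"
      using assms(2) by (intro mult_right_mono) (auto simp: x1_y1_x2_y2_def)
    also have "\<dots> = - y1 * (x2 * y2)"
      by (simp only: mult_ac)
    also have "\<dots> = a * x1 * y1^2"
      by (simp add: im power2_eq_square)
    finally have h: "x2^2 \<le> a * y1^2"
      using assms(1)
      by (simp add: x1_y1_x2_y2_def power2_eq_square mult.assoc mult_le_cancel_left_pos)
    have "a * x1^2 * x2^2 \<le> a * x1^2 * (a * y1^2)"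
      using h assms(3) by (intro mult_left_mono) auto
    also have "\<dots> = (a * x1 * y1)^2"
      by (simp add: power_mult_distrib power2_eq_square)
    also have "\<dots> = (x2 * y2)^2"
      using im by simp
    also have "\<dots> = y2^2 * x2^2"
      by (simp add: power_mult_distrib)
    finally have "a * x1^2 \<le> y2^2"
      using assms(2) by (simp add: x1_y1_x2_y2_def mult_le_cancel_right_pos)
    with h re show False
      by (simp add: algebra_simps)
  qed
  then show ?thesis
    by (simp add: x1_y1_x2_y2_def)
qed

lemma joukowski_inj:
  fixes w w' :: complex
  assumes "w \<noteq> 0" "w' \<noteq> 0" "norm w < 1" "norm w' < 1" "w + 1 / w = w' + 1 / w'"
  shows "w = w'"
proof -
  have "(w - w') * (w * w' - 1) = 0"
    using assms(1,2,5) by (simp add: field_simps)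
  moreover have "norm w * norm w' \<le> norm w'"
    using assms(3) by (intro mult_left_le_one_le) auto
  then have "w * w' \<noteq> 1"
    using assms(4) by (auto simp: norm_mult dest: arg_cong[of _ _ norm])
  ultimately show ?thesis
    by simp
qed

lemma abs_add_inverse_gt_2:
  fixes x :: real
  assumes "0 < \<bar>x\<bar>" "\<bar>x\<bar> < 1"
  shows "2 < \<bar>x + 1 / x\<bar>"
proof -
  have "0 < (\<bar>x\<bar> - 1)^2"
    using assms by simp
  then have "2 * \<bar>x\<bar> < x^2 + 1"
    by (simp add: power2_eq_square algebra_simps)
  moreover have "x + 1 / x = (x^2 + 1) / x"
    using assms by (simp add: field_simps power2_eq_square)
  then have "\<bar>x + 1 / x\<bar> = (x^2 + 1) / \<bar>x\<bar>"
    by (simp add: abs_divide)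
  ultimately show ?thesis
    using assms by (simp add: less_divide_eq)
qed

section \<open>Chebyshev polynomials of the third and fourth kind\<close>

text \<open>Homogenised Chebyshev polynomials of the third and fourth kind:
  \<open>chebyshev_V k (cos \<theta>) 1 = cos ((2k+1)\<theta>/2) / cos (\<theta>/2)\<close> and
  \<open>chebyshev_W k (cos \<theta>) 1 = sin ((2k+1)\<theta>/2) / sin (\<theta>/2)\<close>.\<close>

fun chebyshev_V :: "nat \<Rightarrow> 'a::comm_ring_1 \<Rightarrow> 'a \<Rightarrow> 'a" where
  "chebyshev_V 0 u v = 1"
| "chebyshev_V (Suc 0) u v = 2 * u - v"
| "chebyshev_V (Suc (Suc k)) u v = 2 * u * chebyshev_V (Suc k) u v - v^2 * chebyshev_V k u v"

fun chebyshev_W :: "nat \<Rightarrow> 'a::comm_ring_1 \<Rightarrow> 'a \<Rightarrow> 'a" where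
  "chebyshev_W 0 u v = 1"
| "chebyshev_W (Suc 0) u v = 2 * u + v"
| "chebyshev_W (Suc (Suc k)) u v = 2 * u * chebyshev_W (Suc k) u v - v^2 * chebyshev_W k u v"

fun chebyshev_V_diff_quot :: "nat \<Rightarrow> 'a::comm_ring_1 \<Rightarrow> 'a \<Rightarrow> 'a" where
  "chebyshev_V_diff_quot 0 u v = 0"
| "chebyshev_V_diff_quot (Suc 0) u v = 2 * v"
| "chebyshev_V_diff_quot (Suc (Suc k)) u v =
     2 * u * chebyshev_V_diff_quot (Suc k) u v - v^2 * chebyshev_V_diff_quot k u v + 2 * v^(k+2)"

lemma chebyshev_V_homogeneous: "chebyshev_V k (x * v) v = v^k * chebyshev_V k x 1"
  by (induction k "x * v" v rule: chebyshev_V.induct) (auto simp: algebra_simps power2_eq_square)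

lemma chebyshev_W_homogeneous: "chebyshev_W k (x * v) v = v^k * chebyshev_W k x 1"
  by (induction k "x * v" v rule: chebyshev_W.induct) (auto simp: algebra_simps power2_eq_square)

lemma chebyshev_V_diff_quot_homogeneous:
  "chebyshev_V_diff_quot k (x * v) v = v^k * chebyshev_V_diff_quot k x 1"
  by (induction k "x * v" v rule: chebyshev_V_diff_quot.induct)
     (auto simp: algebra_simps power2_eq_square)

lemma chebyshev_V_eq_diff_quot: "chebyshev_V k x 1 = 1 + (x - 1) * chebyshev_V_diff_quot k x 1"
proof (induction k rule: induct_nat_012)
  case (ge2 k)
  have "chebyshev_V (Suc (Suc k)) x 1 = 2 * x * chebyshev_V (Suc k) x 1 - chebyshev_V k x 1"
    by simp
  also have "\<dots> = 1 + (x - 1) * chebyshev_V_diff_quot (Suc (Suc k)) x 1"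
    unfolding ge2 by (simp add: algebra_simps)
  finally show ?case .
qed (simp_all add: algebra_simps)

lemma chebyshev_V_zero [simp]: "chebyshev_V k u 0 = (2 * u)^k"
  by (induction k u "0::'a" rule: chebyshev_V.induct) auto

lemma chebyshev_W_zero [simp]: "chebyshev_W k u 0 = (2 * u)^k"
  by (induction k u "0::'a" rule: chebyshev_W.induct) auto

lemma chebyshev_V_diff_quot_zero [simp]: "chebyshev_V_diff_quot k u 0 = 0"
  by (induction k u "0::'a" rule: chebyshev_V_diff_quot.induct) auto

lemma of_real_chebyshev_V:
  "of_real (chebyshev_V k x y) =
     chebyshev_V k (of_real x) (of_real y :: 'a::{real_algebra_1,comm_ring_1})"
  by (induction k x y rule: chebyshev_V.induct) auto

lemma of_real_chebyshev_W:
  "of_real (chebyshev_W k x y) =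
     chebyshev_W k (of_real x) (of_real y :: 'a::{real_algebra_1,comm_ring_1})"
  by (induction k x y rule: chebyshev_W.induct) auto

lemma of_real_chebyshev_V_diff_quot:
  "of_real (chebyshev_V_diff_quot k x y) =
     chebyshev_V_diff_quot k (of_real x) (of_real y :: 'a::{real_algebra_1,comm_ring_1})"
  by (induction k x y rule: chebyshev_V_diff_quot.induct) auto

lemma cnj_chebyshev_V: "cnj (chebyshev_V k u v) = chebyshev_V k (cnj u) (cnj v)"
  by (induction k u v rule: chebyshev_V.induct) auto

lemma cnj_chebyshev_W: "cnj (chebyshev_W k u v) = chebyshev_W k (cnj u) (cnj v)"
  by (induction k u v rule: chebyshev_W.induct) auto

lemma cnj_chebyshev_V_diff_quot:
  "cnj (chebyshev_V_diff_quot k u v) = chebyshev_V_diff_quot k (cnj u) (cnj v)"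
  by (induction k u v rule: chebyshev_V_diff_quot.induct) auto

lemma holomorphic_on_chebyshev_V [holomorphic_intros]:
  assumes "f holomorphic_on S" "g holomorphic_on S"
  shows "(\<lambda>w. chebyshev_V k (f w) (g w)) holomorphic_on S"
  by (induction k rule: induct_nat_012) (auto intro!: holomorphic_intros assms)

lemma holomorphic_on_chebyshev_W [holomorphic_intros]:
  assumes "f holomorphic_on S" "g holomorphic_on S"
  shows "(\<lambda>w. chebyshev_W k (f w) (g w)) holomorphic_on S"
  by (induction k rule: induct_nat_012) (auto intro!: holomorphic_intros assms)

lemma holomorphic_on_chebyshev_V_diff_quot [holomorphic_intros]:
  assumes "f holomorphic_on S" "g holomorphic_on S"
  shows "(\<lambda>w. chebyshev_V_diff_quot k (f w) (g w)) holomorphic_on S"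
  by (induction k rule: induct_nat_012) (auto intro!: holomorphic_intros assms)

text \<open>With \<open>x = (q + 1/q)/2\<close>, i.e. \<open>x = cos \<theta>\<close> for \<open>q = e^(i\<theta>)\<close>, these are the closed forms
  of \<open>V\<^sub>k\<close> and \<open>W\<^sub>k\<close>.\<close>

lemma chebyshev_V_closed_form:
  assumes "2 * x * q = q^2 + 1"
  shows "q^k * (q + 1) * chebyshev_V k x 1 = q^(2*k+1) + 1"
proof -
  have "(q + 1) * chebyshev_V k u q = q^(2*k+1) + 1" if "2 * u = q^2 + 1" for u
    using that
  proof (induction k u q rule: chebyshev_V.induct)
    case (2 u q)
    then show ?case
      by (simp add: algebra_simps power2_eq_square power3_eq_cube numeral_3_eq_3)
  next
    case (3 k u q)
    have "(q + 1) * chebyshev_V (Suc (Suc k)) u q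
        = (2 * u) * ((q + 1) * chebyshev_V (Suc k) u q) - q^2 * ((q + 1) * chebyshev_V k u q)"
      by (simp add: algebra_simps)
    also have "\<dots> = (q^2 + 1) * (q^(2 * Suc k + 1) + 1) - q^2 * (q^(2*k+1) + 1)"
      using 3 by simp
    also have "\<dots> = q^(2 * Suc (Suc k) + 1) + 1"
      by (simp add: algebra_simps power_add power2_eq_square)
    finally show ?case .
  qed simp
  from this[of "x * q"] assms
  have "(q + 1) * chebyshev_V k (x * q) q = q^(2*k+1) + 1"
    by (simp add: mult_ac)
  then show ?thesis
    unfolding chebyshev_V_homogeneous by (simp add: mult_ac)
qed

lemma chebyshev_W_closed_form:
  assumes "2 * x * q = q^2 + 1"
  shows "q^k * (q - 1) * chebyshev_W k x 1 = q^(2*k+1) - 1"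
proof -
  have "(q - 1) * chebyshev_W k u q = q^(2*k+1) - 1" if "2 * u = q^2 + 1" for u
    using that
  proof (induction k u q rule: chebyshev_W.induct)
    case (2 u q)
    then show ?case
      by (simp add: algebra_simps power2_eq_square power3_eq_cube numeral_3_eq_3)
  next
    case (3 k u q)
    have "(q - 1) * chebyshev_W (Suc (Suc k)) u q
        = (2 * u) * ((q - 1) * chebyshev_W (Suc k) u q) - q^2 * ((q - 1) * chebyshev_W k u q)"
      by (simp add: algebra_simps)
    also have "\<dots> = (q^2 + 1) * (q^(2 * Suc k + 1) - 1) - q^2 * (q^(2*k+1) - 1)"
      using 3 by simp
    also have "\<dots> = q^(2 * Suc (Suc k) + 1) - 1"
      by (simp add: algebra_simps power_add power2_eq_square)
    finally show ?case .
  qed simp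
  from this[of "x * q"] assms
  have "(q - 1) * chebyshev_W k (x * q) q = q^(2*k+1) - 1"
    by (simp add: mult_ac)
  then show ?thesis
    unfolding chebyshev_W_homogeneous by (simp add: mult_ac)
qed

lemma odd_multiple_chebyshev_V:
  fixes f :: "real \<Rightarrow> real"
  assumes rec: "\<And>y. f (y + 2 * x) = 2 * c * f y - f (y - 2 * x)" and even: "f (- x) = f x"
  shows "f (real (2*k+1) * x) = f x * chebyshev_V k c 1"
proof (induction k rule: induct_nat_012)
  case 1
  show ?case
    using rec[of x] even by (simp add: algebra_simps)
next
  case (ge2 k)
  have "real (2 * Suc (Suc k) + 1) * x = real (2 * Suc k + 1) * x + 2 * x"
    "real (2 * Suc k + 1) * x - 2 * x = real (2*k+1) * x"
    by (simp_all add: algebra_simps)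
  then show ?case
    using ge2 rec[of "real (2 * Suc k + 1) * x"] by (simp add: algebra_simps)
qed simp

lemma odd_multiple_chebyshev_W:
  fixes f :: "real \<Rightarrow> real"
  assumes rec: "\<And>y. f (y + 2 * x) = 2 * c * f y - f (y - 2 * x)" and odd: "f (- x) = - f x"
  shows "f (real (2*k+1) * x) = f x * chebyshev_W k c 1"
proof (induction k rule: induct_nat_012)
  case 1
  show ?case
    using rec[of x] odd by (simp add: algebra_simps)
next
  case (ge2 k)
  have "real (2 * Suc (Suc k) + 1) * x = real (2 * Suc k + 1) * x + 2 * x"
    "real (2 * Suc k + 1) * x - 2 * x = real (2*k+1) * x"
    by (simp_all add: algebra_simps)
  then show ?case
    using ge2 rec[of "real (2 * Suc k + 1) * x"] by (simp add: algebra_simps)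
qed simp

lemma sin_odd_multiple: "sin (real (2*k+1) * x) = sin x * chebyshev_W k (cos (2 * x)) 1"
  by (rule odd_multiple_chebyshev_W) (simp_all add: sin_add sin_diff)

lemma sinh_odd_multiple: "sinh (real (2*k+1) * x) = sinh x * chebyshev_W k (cosh (2 * x)) 1"
  by (rule odd_multiple_chebyshev_W) (simp_all add: sinh_add sinh_diff)

lemma cos_odd_multiple: "cos (real (2*k+1) * x) = cos x * chebyshev_V k (cos (2 * x)) 1"
  by (rule odd_multiple_chebyshev_V) (simp_all add: cos_add cos_diff)

lemma cosh_odd_multiple: "cosh (real (2*k+1) * x) = cosh x * chebyshev_V k (cosh (2 * x)) 1"
  by (rule odd_multiple_chebyshev_V) (simp_all add: cosh_add cosh_diff)

lemma cayley_transform: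
  fixes s :: complex
  assumes "Re s > 0" "s \<noteq> 1"
  defines "q \<equiv> (s - 1) / (s + 1)"
  shows "2 * ((s^2 + 1) / (s^2 - 1)) * q = q^2 + 1" "s * (q - 1) = - (q + 1)" "q + 1 \<noteq> 0"
    "norm q < 1"
proof -
  have ne: "s + 1 \<noteq> 0" "s - 1 \<noteq> 0" "s \<noteq> 0"
    using assms(1,2) by (auto simp: complex_eq_iff)
  have "s^2 - 1 = (s - 1) * (s + 1)"
    by (simp add: algebra_simps power2_eq_square)
  then have "(s^2 + 1) / (s^2 - 1) * q = (s^2 + 1) / ((s + 1) * (s + 1))"
    using ne by (simp add: q_def divide_simps)
  moreover have "q^2 + 1 = 2 * (s^2 + 1) / ((s + 1) * (s + 1))"
    using ne by (simp add: q_def divide_simps power2_eq_square) (simp add: algebra_simps)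
  ultimately show "2 * ((s^2 + 1) / (s^2 - 1)) * q = q^2 + 1"
    by (metis mult.assoc times_divide_eq_right)
  show "s * (q - 1) = - (q + 1)" "q + 1 \<noteq> 0"
    using ne by (simp_all add: q_def field_simps)
  show "norm q < 1"
    using norm_diff_less_norm_add_iff[of s 1] assms(1)
    by (auto simp: q_def norm_divide divide_less_eq)
qed

text \<open>With \<open>q\<^sub>i = (s\<^sub>i - 1)/(s\<^sub>i + 1)\<close> in the open unit disc, the closed forms turn the
  expression into a nonzero multiple of \<open>q\<^sub>1\<^bsup>2k+1\<^esup> q\<^sub>2\<^bsup>2l+1\<^esup> + 1\<close>.\<close>

lemma chebyshev_W_V_combination_nonzero:
  fixes s1 s2 :: complex
  assumes "Re s1 > 0" "Re s2 > 0" "s1 \<noteq> 1" "s2 \<noteq> 1"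
  defines "x1 \<equiv> (s1^2 + 1) / (s1^2 - 1)" and "x2 \<equiv> (s2^2 + 1) / (s2^2 - 1)"
  shows "chebyshev_W k x1 1 * chebyshev_W l x2 1
    + s1 * s2 * (chebyshev_V k x1 1 * chebyshev_V l x2 1) \<noteq> 0" (is "?E \<noteq> 0")
proof
  define q1 q2 where "q1 = (s1 - 1) / (s1 + 1)" and "q2 = (s2 - 1) / (s2 + 1)"
  note c1 = cayley_transform[OF assms(1,3), folded x1_def q1_def]
  note c2 = cayley_transform[OF assms(2,4), folded x2_def q2_def]
  assume "?E = 0"
  then have "0 = q1^k * q2^l * (q1 - 1) * (q2 - 1) * (q1 + 1) * (q2 + 1) * ?E"
    by simp
  also have "\<dots> = (q1^k * (q1 - 1) * chebyshev_W k x1 1) * (q2^l * (q2 - 1) * chebyshev_W l x2 1)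
      * (q1 + 1) * (q2 + 1)
      + (s1 * (q1 - 1)) * (s2 * (q2 - 1)) * (q1^k * (q1 + 1) * chebyshev_V k x1 1)
      * (q2^l * (q2 + 1) * chebyshev_V l x2 1)"
    by (simp add: algebra_simps)
  also have "\<dots> = 2 * (q1 + 1) * (q2 + 1) * (q1^(2*k+1) * q2^(2*l+1) + 1)"
    unfolding chebyshev_W_closed_form[OF c1(1)] chebyshev_W_closed_form[OF c2(1)]
      chebyshev_V_closed_form[OF c1(1)] chebyshev_V_closed_form[OF c2(1)] c1(2) c2(2)
    by (simp add: algebra_simps)
  finally have "q1^(2*k+1) * q2^(2*l+1) = -1"
    using c1(3) c2(3) by (simp add: add_eq_0_iff2)
  then have "norm q1 ^ (2*k+1) * norm q2 ^ (2*l+1) = 1"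
    by (metis norm_minus_cancel norm_mult norm_one norm_power)
  moreover have "norm q1 ^ (2*k+1) < 1" and q2: "norm q2 ^ (2*l+1) \<le> 1"
    using c1(4) c2(4)
    by (simp_all only: power_less_one_iff norm_ge_zero power_le_one less_imp_le) simp
  moreover have "norm q1 ^ (2*k+1) * norm q2 ^ (2*l+1) \<le> norm q1 ^ (2*k+1)"
    using mult_left_mono[OF q2, of "norm q1 ^ (2*k+1)"] by simp
  ultimately show False
    by linarith
qed

section \<open>The integrands as polynomials in \<open>t\<close>\<close>

lemma
  assumes "0 \<le> s" "s \<le> 1"
  shows sin_arcsin_sqrt: "sin (arcsin (sqrt s)) = sqrt s"
    and cos_arcsin_sqrt: "cos (arcsin (sqrt s)) = sqrt (1 - s)"
    and cos_double_arcsin_sqrt: "cos (2 * arcsin (sqrt s)) = 1 - 2 * s"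
proof -
  have "- 1 \<le> sqrt s" "sqrt s \<le> 1"
    using assms by (auto intro: order.trans[of _ 0])
  then show "sin (arcsin (sqrt s)) = sqrt s" "cos (arcsin (sqrt s)) = sqrt (1 - s)"
    "cos (2 * arcsin (sqrt s)) = 1 - 2 * s"
    using assms by (simp_all add: cos_arcsin cos_double_sin)
qed

lemma
  assumes "0 \<le> s"
  shows cosh_arsinh_sqrt: "cosh (arsinh (sqrt s)) = sqrt (1 + s)"
    and cosh_double_arsinh_sqrt: "cosh (2 * arsinh (sqrt s)) = 1 + 2 * s"
  using assms by (simp_all add: cosh_arsinh_real cosh_double_cosh add.commute)

definition CC_poly :: "nat \<Rightarrow> nat \<Rightarrow> real \<Rightarrow> 'a \<Rightarrow> 'a::real_field" where
  "CC_poly k l a t = chebyshev_V k (1 - 2 * t) 1 * chebyshev_V l (1 + 2 * t / of_real a) 1"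

definition SS_poly :: "nat \<Rightarrow> nat \<Rightarrow> real \<Rightarrow> 'a \<Rightarrow> 'a::real_field" where
  "SS_poly k l a t = chebyshev_W k (1 - 2 * t) 1 * chebyshev_W l (1 + 2 * t / of_real a) 1"

lemma of_real_CC_poly: "of_real (CC_poly k l a t) = CC_poly k l a (of_real t :: 'a::real_field)"
  by (simp add: CC_poly_def of_real_chebyshev_V)

lemma of_real_SS_poly: "of_real (SS_poly k l a t) = SS_poly k l a (of_real t :: 'a::real_field)"
  by (simp add: SS_poly_def of_real_chebyshev_W)

context
  fixes a t :: real
  assumes a: "a > 0" and t: "- a \<le> t" "t \<le> 1"
begin

lemma SS_odd: "SS (2*k+1) (2*l+1) a t = t / sqrt a * SS_poly k l a t"
proof (cases "t \<ge> 0")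
  case True
  have "0 \<le> t / a"
    using True a by simp
  with True t have "SS (2*k+1) (2*l+1) a t = (sqrt t * sqrt (t / a)) * SS_poly k l a t"
    unfolding SS_def sin_odd_multiple sinh_odd_multiple SS_poly_def
    by (simp add: sin_arcsin_sqrt cos_double_arcsin_sqrt cosh_double_arsinh_sqrt)
  also have "sqrt t * sqrt (t / a) = t / sqrt a"
    using True a by (simp add: real_sqrt_divide real_sqrt_mult[symmetric])
  finally show ?thesis .
next
  case False
  have "0 \<le> - t / a" "- t / a \<le> 1"
    using False a t by (auto simp: field_simps)
  with False have "SS (2*k+1) (2*l+1) a t = - (sqrt (- t) * sqrt (- t / a)) * SS_poly k l a t"
    unfolding SS_def sin_odd_multiple sinh_odd_multiple SS_poly_def
    by (simp add: sin_arcsin_sqrt cos_double_arcsin_sqrt cosh_double_arsinh_sqrt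
        diff_divide_distrib)
  also have "- (sqrt (- t) * sqrt (- t / a)) = t / sqrt a"
    using False a by (simp add: real_sqrt_divide real_sqrt_mult[symmetric])
  finally show ?thesis .
qed

lemma CC_odd: "CC (2*k+1) (2*l+1) a t = sqrt ((1 - t) * (1 + t / a)) * CC_poly k l a t"
proof (cases "t \<ge> 0")
  case True
  have "0 \<le> t / a"
    using True a by simp
  with True t have "CC (2*k+1) (2*l+1) a t = (sqrt (1 - t) * sqrt (1 + t / a)) * CC_poly k l a t"
    unfolding CC_def cos_odd_multiple cosh_odd_multiple CC_poly_def
    by (simp add: cos_arcsin_sqrt cos_double_arcsin_sqrt cosh_arsinh_sqrt cosh_double_arsinh_sqrt)
  then show ?thesis
    by (simp add: real_sqrt_mult)
next
  case False
  have "0 \<le> - t / a" "- t / a \<le> 1"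
    using False a t by (auto simp: field_simps)
  with False have "CC (2*k+1) (2*l+1) a t = (sqrt (1 - t) * sqrt (1 + t / a)) * CC_poly k l a t"
    unfolding CC_def cos_odd_multiple cosh_odd_multiple CC_poly_def
    by (simp add: cos_arcsin_sqrt cos_double_arcsin_sqrt cosh_arsinh_sqrt cosh_double_arsinh_sqrt
        diff_divide_distrib)
  then show ?thesis
    by (simp add: real_sqrt_mult)
qed

end

lemma rho_eq_sum_squares: "rho n m a t = 2 * ((CC n m a t)^2 + (SS n m a t)^2)"
proof -
  have trig: "cos (2 * x) + cosh (2 * y) = 2 * ((cos x * cosh y)^2 + (sin x * sinh y)^2)"
    for x y :: real
    unfolding cos_double_cos cosh_double_cosh
    by (simp add: power_mult_distrib sin_squared_eq cosh_square_eq algebra_simps)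
  show ?thesis
    using trig[of "real n * arcsin (sqrt t)" "real m * arsinh (sqrt (t / a))"]
      trig[of "real m * arcsin (sqrt (- t / a))" "real n * arsinh (sqrt (- t))"]
    by (simp add: rho_def CC_def SS_def mult.assoc mult_ac power_mult_distrib)
qed

lemma rho_pos:
  assumes "n > 0" "m > 0" "a > 0"
  shows "rho n m a t > 0"
proof -
  have cosh_gt_1: "cosh y > 1" if "y \<noteq> 0" for y :: real
    using that cosh_real_ge_1[of y] cosh_real_one_iff[of y] by linarith
  consider "t = 0" | "t > 0" | "t < 0"
    by linarith
  then show ?thesis
  proof cases
    case 2
    then have "cosh (2 * real m * arsinh (sqrt (t / a))) > 1"
      using assms by (intro cosh_gt_1) simp
    then show ?thesis
      using 2 cos_ge_minus_one[of "2 * real n * arcsin (sqrt t)"]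
      by (simp add: rho_def del: cos_ge_minus_one)
  next
    case 3
    then have "cosh (2 * real n * arsinh (sqrt (- t))) > 1"
      using assms by (intro cosh_gt_1) simp
    then show ?thesis
      using 3 cos_ge_minus_one[of "2 * real m * arcsin (sqrt (- t / a))"]
      by (simp add: rho_def del: cos_ge_minus_one)
  qed (simp add: rho_def)
qed

section \<open>A denominator without zeros in the closed unit disc\<close>

text \<open>\<open>tau a w / w = (1-a)/2 + (1+a)/4 (w + 1/w)\<close> is a Joukowski map; it sends \<open>cis \<theta>\<close> to
  \<open>(1-a)/2 + (1+a)/2 cos \<theta>\<close> and so the unit circle onto \<open>[-a, 1]\<close>.\<close>

definition tau :: "real \<Rightarrow> complex \<Rightarrow> complex" where
  "tau a w = of_real ((1 - a) / 2) * w + of_real ((1 + a) / 4) * (w^2 + 1)"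

lemma tau_div: "w \<noteq> 0 \<Longrightarrow> tau a w / w = of_real ((1 - a) / 2) + of_real ((1 + a) / 4) * (w + 1 / w)"
  by (simp add: tau_def field_simps power2_eq_square)

lemma tau_cis: "tau a (cis \<theta>) = of_real ((1 - a) / 2 + (1 + a) / 2 * cos \<theta>) * cis \<theta>"
proof -
  have "cis \<theta> + 1 / cis \<theta> = 2 * cos \<theta>"
    by (simp add: complex_eq_iff cis_divide[of 0, simplified])
  then have "tau a (cis \<theta>) / cis \<theta> = of_real ((1 - a) / 2 + (1 + a) / 2 * cos \<theta>)"
    by (simp add: tau_div)
  then show ?thesis
    by (simp add: divide_eq_eq)
qed

lemma sigma_cis: "of_real ((1 + a) / 4) * (1 / cis \<theta> - cis \<theta>) = - \<i> * of_real ((1 + a) / 2 * sin \<theta>)"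
  by (simp add: complex_eq_iff cis_divide[of 0, simplified])

lemma cnj_tau: "cnj (tau a w) = tau a (cnj w)"
  by (simp add: tau_def)

lemma holomorphic_on_tau [holomorphic_intros]:
  "f holomorphic_on S \<Longrightarrow> (\<lambda>w. tau a (f w)) holomorphic_on S"
  unfolding tau_def by (intro holomorphic_intros)

lemma tau_div_inj:
  assumes "a > 0" "w \<noteq> 0" "w' \<noteq> 0" "norm w < 1" "norm w' < 1" "tau a w / w = tau a w' / w'"
  shows "w = w'"
proof (rule joukowski_inj)
  have "complex_of_real ((1 + a) / 4) \<noteq> 0"
    unfolding of_real_eq_0_iff using assms(1) by simp
  then show "w + 1 / w = w' + 1 / w'"
    using assms(6) by (simp add: tau_div[OF assms(2)] tau_div[OF assms(3)])
qed (use assms in auto)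

text \<open>\<open>Q_hom k l a w = w\<^bsup>k+l+1\<^esup> (t SS_poly t + \<sigma> CC_poly t)\<close> with \<open>t = tau a w / w\<close> and
  \<open>\<sigma> = (1+a)(1/w - w)/4\<close>, written so that it is a polynomial in \<open>w\<close>.\<close>

definition Q_hom :: "nat \<Rightarrow> nat \<Rightarrow> real \<Rightarrow> complex \<Rightarrow> complex" where
  "Q_hom k l a w =
     tau a w * chebyshev_W k (w - 2 * tau a w) w * chebyshev_W l (w + 2 * tau a w / of_real a) w
   + of_real ((1 + a) / 4) * (1 - w^2)
       * chebyshev_V k (w - 2 * tau a w) w * chebyshev_V l (w + 2 * tau a w / of_real a) w"

lemma Q_hom_eq:
  fixes a :: real and w :: complex
  assumes "w \<noteq> 0"
  defines "t \<equiv> tau a w / w"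
  shows "Q_hom k l a w
    = w^(k+l+1) * (t * SS_poly k l a t + of_real ((1 + a) / 4) * (1 / w - w) * CC_poly k l a t)"
proof -
  define \<sigma> where "\<sigma> = of_real ((1 + a) / 4) * (1 / w - w)"
  have tw: "tau a w = t * w"
    using assms by simp
  have e: "w - 2 * tau a w = (1 - 2 * t) * w"
    "w + 2 * tau a w / of_real a = (1 + 2 * t / of_real a) * w"
    "of_real ((1 + a) / 4) * (1 - w^2) = \<sigma> * w"
    using assms by (simp_all add: tw \<sigma>_def algebra_simps power2_eq_square)
  have "Q_hom k l a w
    = (t * w) * (w^k * chebyshev_W k (1 - 2 * t) 1)
        * (w^l * chebyshev_W l (1 + 2 * t / of_real a) 1)
    + (\<sigma> * w) * (w^k * chebyshev_V k (1 - 2 * t) 1)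
        * (w^l * chebyshev_V l (1 + 2 * t / of_real a) 1)"
    unfolding Q_hom_def e chebyshev_W_homogeneous chebyshev_V_homogeneous unfolding tw ..
  also have "\<dots> = w^(k+l+1) * (t * SS_poly k l a t + \<sigma> * CC_poly k l a t)"
    by (simp add: SS_poly_def CC_poly_def algebra_simps power_add)
  finally show ?thesis
    unfolding \<sigma>_def .
qed

lemma cnj_Q_hom: "cnj (Q_hom k l a w) = Q_hom k l a (cnj w)"
  by (simp add: Q_hom_def cnj_tau cnj_chebyshev_V cnj_chebyshev_W)

lemma holomorphic_on_Q_hom [holomorphic_intros]:
  "a \<noteq> 0 \<Longrightarrow> f holomorphic_on S \<Longrightarrow> (\<lambda>w. Q_hom k l a (f w)) holomorphic_on S"
  unfolding Q_hom_def by (intro holomorphic_intros) auto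

lemma Q_hom_cis:
  fixes a \<theta> :: real
  defines "t \<equiv> (1 - a) / 2 + (1 + a) / 2 * cos \<theta>" and "p \<equiv> (1 + a) / 2 * sin \<theta>"
  shows "Q_hom k l a (cis \<theta>)
    = cis \<theta> ^ (k+l+1) * Complex (t * SS_poly k l a t) (- p * CC_poly k l a t)"
proof -
  have t: "tau a (cis \<theta>) / cis \<theta> = of_real t"
    by (simp add: tau_cis t_def)
  note \<sigma> = sigma_cis[of a \<theta>, folded p_def]
  show ?thesis
    unfolding Q_hom_eq[OF cis_neq_zero] t \<sigma>
    by (simp add: of_real_SS_poly[symmetric] of_real_CC_poly[symmetric] Complex_eq algebra_simps)
qed

lemma cos_param_bounds:
  fixes a \<theta> :: real
  assumes "a > 0"
  shows "- a \<le> (1 - a) / 2 + (1 + a) / 2 * cos \<theta>" "(1 - a) / 2 + (1 + a) / 2 * cos \<theta> \<le> 1"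
proof -
  have "\<bar>(1 + a) / 2 * cos \<theta>\<bar> \<le> (1 + a) / 2"
    using assms by (simp add: abs_mult mult_left_le)
  then show "- a \<le> (1 - a) / 2 + (1 + a) / 2 * cos \<theta>" "(1 - a) / 2 + (1 + a) / 2 * cos \<theta> \<le> 1"
    by (simp_all add: abs_le_iff field_simps)
qed

lemma cos_param_product:
  fixes a \<theta> :: real
  defines "t \<equiv> (1 - a) / 2 + (1 + a) / 2 * cos \<theta>" and "p \<equiv> (1 + a) / 2 * sin \<theta>"
  shows "(1 - t) * (a + t) = p^2"
proof -
  have "(1 - t) * (a + t) = ((1 + a) / 2)^2 * (1 - (cos \<theta>)^2)"
    by (simp add: t_def field_simps power2_eq_square)
  then show ?thesis
    unfolding p_def power_mult_distrib sin_squared_eq .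
qed

context
  fixes a \<theta> t p :: real
  assumes a: "a > 0"
  defines "t \<equiv> (1 - a) / 2 + (1 + a) / 2 * cos \<theta>" and "p \<equiv> (1 + a) / 2 * sin \<theta>"
begin

lemma sqrt_cos_param: "sqrt ((1 - t) * (1 + t / a)) = \<bar>p\<bar> / sqrt a"
proof -
  have "(1 - t) * (1 + t / a) = p^2 / a"
    using cos_param_product[of a \<theta>] a by (simp add: t_def p_def field_simps)
  then show ?thesis
    by (simp add: real_sqrt_divide)
qed

lemma rho_odd_cos_param:
  "rho (2*k+1) (2*l+1) a t = 2 / a * ((t * SS_poly k l a t)^2 + (p * CC_poly k l a t)^2)"
proof -
  note t = cos_param_bounds[OF a, of \<theta>, folded t_def]
  have "(CC (2*k+1) (2*l+1) a t)^2 = p^2 / a * (CC_poly k l a t)^2"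
    unfolding CC_odd[OF a t] sqrt_cos_param using a by (simp add: power_mult_distrib power_divide)
  moreover have "(SS (2*k+1) (2*l+1) a t)^2 = t^2 / a * (SS_poly k l a t)^2"
    unfolding SS_odd[OF a t] using a by (simp add: power_mult_distrib power_divide)
  ultimately show ?thesis
    unfolding rho_eq_sum_squares by (simp add: power_mult_distrib algebra_simps)
qed

lemma cos_param_denominator_pos: "(t * SS_poly k l a t)^2 + (p * CC_poly k l a t)^2 > 0"
proof -
  have "0 < rho (2*k+1) (2*l+1) a t"
    using a by (intro rho_pos) auto
  then show ?thesis
    using a unfolding rho_odd_cos_param by (simp add: zero_less_mult_iff zero_less_divide_iff)
qed

lemma Q_hom_cis_nonzero: "Q_hom k l a (cis \<theta>) \<noteq> 0"
proof -
  have "Complex (t * SS_poly k l a t) (- p * CC_poly k l a t) \<noteq> 0"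
    using cos_param_denominator_pos[of k l] by (auto simp: complex_eq_iff)
  then show ?thesis
    by (simp add: Q_hom_cis[where a = a and \<theta> = \<theta>, folded t_def p_def])
qed

end


lemma Q_hom_zero_nonzero:
  assumes "a > 0"
  shows "Q_hom k l a 0 \<noteq> 0"
proof -
  define \<tau>0 where "\<tau>0 = complex_of_real ((1 + a) / 4)"
  have "\<tau>0 \<noteq> 0"
    unfolding \<tau>0_def of_real_eq_0_iff using assms by simp
  moreover have "tau a 0 = \<tau>0"
    by (simp add: tau_def \<tau>0_def)
  then have "Q_hom k l a 0 = 2 * \<tau>0 * (- 4 * \<tau>0)^k * (4 * \<tau>0 / of_real a)^l"
    unfolding Q_hom_def \<tau>0_def[symmetric] by (simp add: algebra_simps)
  ultimately show ?thesis
    using assms by simp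
qed

lemma joukowski_off_interval:
  assumes a: "a > 0" and w: "w \<noteq> 0" "norm w < 1"
  shows "Im (tau a w / w) \<noteq> 0 \<or> Re (tau a w / w) > 1 \<or> Re (tau a w / w) < - a"
proof (cases "Im w = 0")
  case False
  define N where "N = (Re w)^2 + (Im w)^2"
  have N: "0 < N" "N < 1"
    using w by (auto simp: N_def cmod_power2[symmetric] power_less_one_iff simp del: cmod_power2)
  have "Im w - Im w / N \<noteq> 0"
    using False N by (simp add: field_simps)
  then have "(1 + a) / 4 * (Im w - Im w / N) \<noteq> 0"
    using a by simp
  moreover have "Im (tau a w / w) = (1 + a) / 4 * (Im w - Im w / N)"
    using w by (simp add: tau_div Im_divide N_def)
  ultimately show ?thesis
    by metis
next
  case True
  define x where "x = Re w"
  have wx: "w = of_real x"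
    using True by (simp add: x_def complex_eq_iff)
  with w have x: "0 < \<bar>x\<bar>" "\<bar>x\<bar> < 1"
    by auto
  define y where "y = x + 1 / x"
  have "2 < \<bar>y\<bar>"
    unfolding y_def using x by (rule abs_add_inverse_gt_2)
  then consider "2 < y" | "y < - 2"
    by linarith
  moreover have re: "Re (tau a w / w) = (1 - a) / 2 + (1 + a) / 4 * y"
    using w by (simp add: tau_div wx y_def)
  ultimately show ?thesis
  proof cases
    case 1
    then have "(1 + a) / 4 * (y - 2) > 0"
      using a by simp
    then show ?thesis
      using re by (simp add: field_simps)
  next
    case 2
    then have "(1 + a) / 4 * (- 2 - y) > 0"
      using a by simp
    then show ?thesis
      using re by (simp add: field_simps)
  qed
qed

lemma Re_csqrt_joukowski:
  fixes t :: complex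
  assumes a: "a > 0" and t: "Im t \<noteq> 0 \<or> Re t > 1 \<or> Re t < - a"
  shows "t \<noteq> 0" "Re (csqrt ((t - 1) / t)) > 0" "Re (csqrt ((t + of_real a) / t)) > 0"
proof -
  show t0: "t \<noteq> 0"
    using t a by auto
  have "(Im ((t - 1) / t) \<noteq> 0 \<or> Re ((t - 1) / t) > 0)
      \<and> (Im ((t + of_real a) / t) \<noteq> 0 \<or> Re ((t + of_real a) / t) > 0)"
  proof (cases "Im t = 0")
    case False
    then have N: "(Re t)^2 + (Im t)^2 > 0"
      by (simp add: sum_power2_gt_zero_iff)
    have "Im ((t - 1) / t) = Im t / ((Re t)^2 + (Im t)^2)"
      "Im ((t + of_real a) / t) = - a * Im t / ((Re t)^2 + (Im t)^2)"
      by (simp_all add: Im_divide algebra_simps)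
    then show ?thesis
      using False N a by auto
  next
    case True
    define r where "r = Re t"
    have "t = of_real r"
      using True by (simp add: r_def complex_eq_iff)
    moreover have "r > 1 \<or> r < - a"
      using t True by (simp add: r_def)
    then have "(r - 1) / r > 0" "(r + a) / r > 0"
      using a by (auto simp: divide_pos_pos divide_neg_neg)
    ultimately show ?thesis
      by simp
  qed
  then show "Re (csqrt ((t - 1) / t)) > 0" "Re (csqrt ((t + of_real a) / t)) > 0"
    using Re_csqrt_pos by blast+
qed

text \<open>The principal square roots pick the preimage of \<open>t\<close> inside the unit disc; this is what
  fixes the sign of \<open>s1 * s2\<close> in \<open>Q_hom_nonzero_disc\<close>.\<close>

lemma joukowski_preimage:
  fixes s1 s2 t :: complex
  assumes a: "a > 0" and t: "t \<noteq> 0"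
    and s1: "s1^2 = (t - 1) / t" and s2: "s2^2 = (t + of_real a) / t"
    and Re_pos: "Re s1 > 0" "Re s2 > 0"
  defines "w \<equiv> (s2 - s1) / (s2 + s1)"
  shows "w \<noteq> 0" "norm w < 1" "tau a w / w = t" "of_real ((1 + a) / 4) * (1 / w - w) = t * s1 * s2"
proof -
  have a1: "1 + complex_of_real a \<noteq> 0"
    using a by (auto simp: complex_eq_iff)
  then have ta: "t + t * complex_of_real a \<noteq> 0"
    using t by (metis mult.right_neutral distrib_left mult_eq_0_iff)
  have diff: "s2^2 - s1^2 = (1 + of_real a) / t"
    and sum: "s1^2 + s2^2 = (2 * t + of_real a - 1) / t"
    using t by (simp_all add: s1 s2 field_simps)
  have D: "s2 + s1 \<noteq> 0"
    using Re_pos by (auto simp: complex_eq_iff)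
  have E: "s2 - s1 \<noteq> 0"
    using diff a1 t by auto
  show w0: "w \<noteq> 0"
    using D E by (simp add: w_def)
  have "s2^2 + of_real a * s1^2 = of_real (1 + a)"
    using t by (simp add: s1 s2 field_simps)
  then have "Re (s2 * cnj s1) > 0"
    using Re_mult_cnj_pos[OF Re_pos(1,2) a, of "1 + a"] a by (simp add: mult.commute)
  then show "norm w < 1"
    using D by (simp add: w_def norm_divide divide_less_eq norm_diff_less_norm_add_iff)
  have "w + 1 / w = ((s2 - s1)^2 + (s2 + s1)^2) / ((s2 - s1) * (s2 + s1))"
    using D E by (simp add: w_def field_simps power2_eq_square)
  also have "\<dots> = 2 * (s1^2 + s2^2) / (s2^2 - s1^2)"
    by (simp add: power2_eq_square algebra_simps)
  also have "\<dots> = 2 * (2 * t + of_real a - 1) / (1 + of_real a)"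
    unfolding sum diff using t a1 ta by (simp add: field_simps)
  finally have w_inv: "w + 1 / w = 2 * (2 * t + of_real a - 1) / (1 + of_real a)" .
  have "4 + complex_of_real a * 4 \<noteq> 0"
    using a by (auto simp: complex_eq_iff)
  then show "tau a w / w = t"
    unfolding tau_div[OF w0] w_inv using a1 by (simp add: field_simps)
  have "1 / w - w = ((s2 + s1)^2 - (s2 - s1)^2) / ((s2 - s1) * (s2 + s1))"
    using D E by (simp add: w_def field_simps power2_eq_square)
  also have "\<dots> = 4 * s1 * s2 / (s2^2 - s1^2)"
    by (simp add: power2_eq_square algebra_simps)
  also have "\<dots> = 4 * t * s1 * s2 / (1 + of_real a)"
    unfolding diff using t a1 ta by (simp add: field_simps)
  finally show "of_real ((1 + a) / 4) * (1 / w - w) = t * s1 * s2"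
    using a1 by (simp add: field_simps)
qed

lemma Q_hom_nonzero_disc:
  assumes a: "a > 0" and w: "norm w < 1"
  shows "Q_hom k l a w \<noteq> 0"
proof (cases "w = 0")
  case True
  then show ?thesis
    using Q_hom_zero_nonzero[OF a] by simp
next
  case False
  define t where "t = tau a w / w"
  note cut = Re_csqrt_joukowski[OF a joukowski_off_interval[OF a False w, folded t_def]]
  define s1 s2 where "s1 = csqrt ((t - 1) / t)" and "s2 = csqrt ((t + of_real a) / t)"
  have sq: "s1^2 = (t - 1) / t" "s2^2 = (t + of_real a) / t"
    by (simp_all add: s1_def s2_def)
  note pre = joukowski_preimage[OF a cut(1) sq cut(2,3)[folded s1_def s2_def]]
  have "w = (s2 - s1) / (s2 + s1)"
    using pre(3) by (intro tau_div_inj[OF a False pre(1) w pre(2)]) (simp add: t_def)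
  then have \<sigma>: "of_real ((1 + a) / 4) * (1 / w - w) = t * (s1 * s2)"
    using pre(4) by (simp add: mult.assoc)
  have "1 - 2 * t = (s1^2 + 1) / (s1^2 - 1)" "1 + 2 * t / of_real a = (s2^2 + 1) / (s2^2 - 1)"
    using cut(1) a by (simp_all add: sq field_simps)
  moreover have "s1 \<noteq> 1" "s2 \<noteq> 1"
    using sq cut(1) a by (auto simp: field_simps)
  ultimately have "SS_poly k l a t + s1 * s2 * CC_poly k l a t \<noteq> 0"
    using chebyshev_W_V_combination_nonzero[of s1 s2 k l] cut(2,3)
    by (simp add: SS_poly_def CC_poly_def s1_def s2_def)
  then have "t * SS_poly k l a t + t * (s1 * s2) * CC_poly k l a t \<noteq> 0"
    using cut(1) by (simp add: ring_distribs(1)[symmetric] mult.assoc)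
  then show ?thesis
    unfolding Q_hom_eq[OF False] t_def[symmetric] \<sigma> using False by simp
qed

lemma Q_hom_nonzero_cball:
  assumes "a > 0" "norm w \<le> 1"
  shows "Q_hom k l a w \<noteq> 0"
proof (cases "norm w = 1")
  case True
  then have "w \<noteq> 0"
    by auto
  with True have "w = cis (Arg w)"
    using cis_Arg[of w] by (simp add: sgn_eq)
  then show ?thesis
    using Q_hom_cis_nonzero[OF assms(1)] by metis
next
  case False
  then show ?thesis
    using assms by (intro Q_hom_nonzero_disc) auto
qed

text \<open>By \<open>M_poly_eq\<close>, \<open>M_poly t = (a - (1 - t)(a + t) CC_poly t) / t\<close>; this is what makes
  \<open>Re_PhiM_cis\<close> produce the substituted integrand of the weight \<open>1/t\<close>.\<close>

definition M_poly :: "nat \<Rightarrow> nat \<Rightarrow> real \<Rightarrow> 'a \<Rightarrow> 'a::real_field" where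
  "M_poly k l a t =
     2 * of_real a * chebyshev_V_diff_quot k (1 - 2 * t) 1
   - 2 * chebyshev_V_diff_quot l (1 + 2 * t / of_real a) 1
   + 4 * t * chebyshev_V_diff_quot k (1 - 2 * t) 1
       * chebyshev_V_diff_quot l (1 + 2 * t / of_real a) 1
   + (t - of_real (1 - a)) * CC_poly k l a t"

lemma M_poly_eq:
  assumes "a \<noteq> 0"
  shows "t * M_poly k l a t = of_real a - (1 - t) * (of_real a + t) * CC_poly k l a t"
proof -
  have "of_real a \<noteq> (0::'a)"
    using assms by simp
  then show ?thesis
    unfolding M_poly_def CC_poly_def chebyshev_V_eq_diff_quot[of k] chebyshev_V_eq_diff_quot[of l]
    by (simp add: field_simps)
qed

lemma of_real_M_poly: "of_real (M_poly k l a t) = M_poly k l a (of_real t :: 'a::real_field)"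
  by (simp add: M_poly_def of_real_CC_poly[symmetric] of_real_chebyshev_V_diff_quot)

definition M_hom :: "nat \<Rightarrow> nat \<Rightarrow> real \<Rightarrow> complex \<Rightarrow> complex" where
  "M_hom k l a w =
     2 * of_real a * w^(l+1) * chebyshev_V_diff_quot k (w - 2 * tau a w) w
   - 2 * w^(k+1) * chebyshev_V_diff_quot l (w + 2 * tau a w / of_real a) w
   + 4 * tau a w * chebyshev_V_diff_quot k (w - 2 * tau a w) w
       * chebyshev_V_diff_quot l (w + 2 * tau a w / of_real a) w
   + of_real ((1 + a) / 4) * (1 - w^2)
       * chebyshev_W k (w - 2 * tau a w) w * chebyshev_W l (w + 2 * tau a w / of_real a) w
   + (tau a w - of_real (1 - a) * w)
       * chebyshev_V k (w - 2 * tau a w) w * chebyshev_V l (w + 2 * tau a w / of_real a) w"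

lemma M_hom_eq:
  fixes a :: real and w :: complex
  assumes "w \<noteq> 0"
  defines "t \<equiv> tau a w / w"
  shows "M_hom k l a w
    = w^(k+l+1) * (M_poly k l a t + of_real ((1 + a) / 4) * (1 / w - w) * SS_poly k l a t)"
proof -
  define \<sigma> where "\<sigma> = of_real ((1 + a) / 4) * (1 / w - w)"
  have tw: "tau a w = t * w"
    using assms by simp
  have e: "w - 2 * tau a w = (1 - 2 * t) * w"
    "w + 2 * tau a w / of_real a = (1 + 2 * t / of_real a) * w"
    "of_real ((1 + a) / 4) * (1 - w^2) = \<sigma> * w"
    "tau a w - of_real (1 - a) * w = (t - of_real (1 - a)) * w"
    using assms by (simp_all add: tw \<sigma>_def algebra_simps power2_eq_square)
  have "M_hom k l a w
    = 2 * of_real a * w^(l+1) * (w^k * chebyshev_V_diff_quot k (1 - 2 * t) 1)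
    - 2 * w^(k+1) * (w^l * chebyshev_V_diff_quot l (1 + 2 * t / of_real a) 1)
    + 4 * (t * w) * (w^k * chebyshev_V_diff_quot k (1 - 2 * t) 1)
        * (w^l * chebyshev_V_diff_quot l (1 + 2 * t / of_real a) 1)
    + (\<sigma> * w) * (w^k * chebyshev_W k (1 - 2 * t) 1)
        * (w^l * chebyshev_W l (1 + 2 * t / of_real a) 1)
    + ((t - of_real (1 - a)) * w) * (w^k * chebyshev_V k (1 - 2 * t) 1)
        * (w^l * chebyshev_V l (1 + 2 * t / of_real a) 1)"
    unfolding M_hom_def e chebyshev_W_homogeneous chebyshev_V_homogeneous
      chebyshev_V_diff_quot_homogeneous
    unfolding tw ..
  also have "\<dots> = w^(k+l+1) * (M_poly k l a t + \<sigma> * SS_poly k l a t)"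
    by (simp add: M_poly_def SS_poly_def CC_poly_def algebra_simps power_add)
  finally show ?thesis
    unfolding \<sigma>_def .
qed

lemma M_hom_zero: "M_hom k l a 0 = Q_hom k l a 0"
  by (simp add: M_hom_def Q_hom_def)

lemma cnj_M_hom: "cnj (M_hom k l a w) = M_hom k l a (cnj w)"
  by (simp add: M_hom_def cnj_tau cnj_chebyshev_V cnj_chebyshev_W cnj_chebyshev_V_diff_quot)

lemma holomorphic_on_M_hom [holomorphic_intros]:
  "a \<noteq> 0 \<Longrightarrow> f holomorphic_on S \<Longrightarrow> (\<lambda>w. M_hom k l a (f w)) holomorphic_on S"
  unfolding M_hom_def by (intro holomorphic_intros) auto

lemma M_hom_cis:
  fixes a \<theta> :: real
  defines "t \<equiv> (1 - a) / 2 + (1 + a) / 2 * cos \<theta>" and "p \<equiv> (1 + a) / 2 * sin \<theta>"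
  shows "M_hom k l a (cis \<theta>) = cis \<theta> ^ (k+l+1) * Complex (M_poly k l a t) (- p * SS_poly k l a t)"
proof -
  have t: "tau a (cis \<theta>) / cis \<theta> = of_real t"
    by (simp add: tau_cis t_def)
  note \<sigma> = sigma_cis[of a \<theta>, folded p_def]
  show ?thesis
    unfolding M_hom_eq[OF cis_neq_zero] t \<sigma>
    by (simp add: of_real_SS_poly[symmetric] of_real_M_poly[symmetric] Complex_eq algebra_simps)
qed

text \<open>On the unit circle these are \<open>t\<^sup>j / V\<close>, \<open>\<sigma> t\<^sup>j / V\<close> and \<open>(M_poly t + \<sigma> SS_poly t) / (a V)\<close> with
  \<open>V = t SS_poly t + \<sigma> CC_poly t\<close>, in the notation of \<open>Q_hom_eq\<close>.  The powers of \<open>w\<close> make them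
  holomorphic at \<open>0\<close>; their natural-number exponents are only used for \<open>j \<le> k + l + 1\<close>
  resp. \<open>j \<le> k + l\<close>.\<close>

definition PhiS :: "nat \<Rightarrow> nat \<Rightarrow> real \<Rightarrow> nat \<Rightarrow> complex \<Rightarrow> complex" where
  "PhiS k l a j w = tau a w ^ j * w ^ (k + l + 1 - j) / Q_hom k l a w"

definition PhiC :: "nat \<Rightarrow> nat \<Rightarrow> real \<Rightarrow> nat \<Rightarrow> complex \<Rightarrow> complex" where
  "PhiC k l a j w =
     of_real ((1 + a) / 4) * (1 - w^2) * tau a w ^ j * w ^ (k + l - j) / Q_hom k l a w"

definition PhiM :: "nat \<Rightarrow> nat \<Rightarrow> real \<Rightarrow> complex \<Rightarrow> complex" where
  "PhiM k l a w = M_hom k l a w / (of_real a * Q_hom k l a w)"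

context
  fixes k l :: nat and a \<theta> t p :: real
  defines "t \<equiv> (1 - a) / 2 + (1 + a) / 2 * cos \<theta>" and "p \<equiv> (1 + a) / 2 * sin \<theta>"
begin

lemma Re_PhiS_cis:
  assumes "j \<le> k + l + 1"
  shows "Re (PhiS k l a j (cis \<theta>))
    = t^j * (t * SS_poly k l a t) / ((t * SS_poly k l a t)^2 + (p * CC_poly k l a t)^2)"
proof -
  define w V where "w = cis \<theta>" and "V = Complex (t * SS_poly k l a t) (- p * CC_poly k l a t)"
  have "PhiS k l a j w = of_real (t^j) * (w^j * w^(k + l + 1 - j)) / (w^(k+l+1) * V)"
    unfolding PhiS_def Q_hom_cis[where a = a and \<theta> = \<theta>, folded t_def p_def]
      tau_cis[of a \<theta>, folded t_def] power_mult_distrib w_def V_def by (simp add: mult.assoc)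
  also have "w^j * w^(k + l + 1 - j) = w^(k+l+1)"
    using assms by (simp flip: power_add)
  finally have "PhiS k l a j w = of_real (t^j) / V"
    by (simp add: w_def)
  then show ?thesis
    by (simp add: w_def V_def Re_divide power2_eq_square)
qed

lemma Re_PhiC_cis:
  assumes "j \<le> k + l"
  shows "Re (PhiC k l a j (cis \<theta>))
    = t^j * p^2 * CC_poly k l a t / ((t * SS_poly k l a t)^2 + (p * CC_poly k l a t)^2)"
proof -
  define w V where "w = cis \<theta>" and "V = Complex (t * SS_poly k l a t) (- p * CC_poly k l a t)"
  have "of_real ((1 + a) / 4) * (1 - w^2) = of_real ((1 + a) / 4) * (1 / w - w) * w"
    by (simp add: w_def field_simps power2_eq_square)
  also have "\<dots> = - \<i> * of_real p * w"
    unfolding w_def p_def sigma_cis ..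
  finally have
    "PhiC k l a j w = - \<i> * of_real (p * t^j) * (w * w^j * w^(k + l - j)) / (w^(k+l+1) * V)"
    unfolding PhiC_def Q_hom_cis[where a = a and \<theta> = \<theta>, folded t_def p_def]
      tau_cis[of a \<theta>, folded t_def] power_mult_distrib w_def V_def by (simp add: mult_ac)
  also have "w * w^j * w^(k + l - j) = w^(k+l+1)"
    using assms by (simp flip: power_add power_Suc)
  finally have "PhiC k l a j w = - \<i> * of_real (p * t^j) / V"
    by (simp add: w_def)
  then show ?thesis
    by (simp add: w_def V_def Re_divide power2_eq_square)
qed

lemma Re_PhiM_cis:
  assumes "a > 0"
  shows "Re (PhiM k l a (cis \<theta>))
    = SS_poly k l a t / ((t * SS_poly k l a t)^2 + (p * CC_poly k l a t)^2)"
proof -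
  define V where "V = Complex (t * SS_poly k l a t) (- p * CC_poly k l a t)"
  have "PhiM k l a (cis \<theta>) = Complex (M_poly k l a t) (- p * SS_poly k l a t) / (of_real a * V)"
    unfolding PhiM_def Q_hom_cis[where a = a and \<theta> = \<theta>, folded t_def p_def]
      M_hom_cis[where a = a and \<theta> = \<theta>, folded t_def p_def] V_def
    by (simp add: mult.left_commute[of "of_real a"])
  also have "\<dots> = Complex (M_poly k l a t) (- p * SS_poly k l a t) / of_real a / V"
    by (simp add: divide_divide_eq_left)
  also have "Complex (M_poly k l a t) (- p * SS_poly k l a t) / of_real a
      = Complex (M_poly k l a t / a) (- p * SS_poly k l a t / a)"
    by (simp add: complex_eq_iff)
  finally have PhiM:
    "PhiM k l a (cis \<theta>) = Complex (M_poly k l a t / a) (- p * SS_poly k l a t / a) / V" .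
  have key: "t * M_poly k l a t + p^2 * CC_poly k l a t = a"
    using M_poly_eq[of a t k l] cos_param_product[of a \<theta>, folded t_def p_def] assms by simp
  have "M_poly k l a t / a * (t * SS_poly k l a t) + p * SS_poly k l a t / a * (p * CC_poly k l a t)
      = SS_poly k l a t * (t * M_poly k l a t + p^2 * CC_poly k l a t) / a"
    by (simp add: algebra_simps power2_eq_square add_divide_distrib)
  also have "\<dots> = SS_poly k l a t"
    using key assms by simp
  finally show ?thesis
    using PhiM
    by (simp add: V_def Re_divide power2_eq_square)
qed

end

context
  fixes k l :: nat and a \<theta> t p :: real
  assumes a: "a > 0" and \<theta>: "\<theta> \<in> {0<..<pi}"
  defines "t \<equiv> (1 - a) / 2 + (1 + a) / 2 * cos \<theta>" and "p \<equiv> (1 + a) / 2 * sin \<theta>"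
begin

lemma cos_param_facts:
  shows "p > 0" "- a \<le> t" "t \<le> 1" "sqrt ((1 - t) * (1 + t / a)) = p / sqrt a"
    "rho (2*k+1) (2*l+1) a t = 2 / a * ((t * SS_poly k l a t)^2 + (p * CC_poly k l a t)^2)"
proof -
  show p: "p > 0"
    using a \<theta> by (simp add: p_def sin_gt_zero)
  show "- a \<le> t" "t \<le> 1"
    using cos_param_bounds[OF a] by (simp_all add: t_def)
  show "sqrt ((1 - t) * (1 + t / a)) = p / sqrt a"
    using sqrt_cos_param[OF a, where \<theta> = \<theta>] p by (simp add: t_def p_def)
  show "rho (2*k+1) (2*l+1) a t = 2 / a * ((t * SS_poly k l a t)^2 + (p * CC_poly k l a t)^2)"
    using rho_odd_cos_param[OF a, where \<theta> = \<theta>] by (simp add: t_def p_def)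
qed

lemma SS_moment_cos_param:
  assumes "j \<le> k + l + 1"
  shows "p * (SS (2*k+1) (2*l+1) a t / rho (2*k+1) (2*l+1) a t * t ^ j
      / sqrt ((1 - t) * (1 + t / a)))
    = a / 2 * Re (PhiS k l a j (cis \<theta>))"
proof -
  have "p * (t / sqrt a * y / (2 / a * d) * t ^ j / (p / sqrt a)) = a / 2 * (t^j * (t * y) / d)"
    for y d :: real
    using cos_param_facts(1) a by (simp add: field_simps)
  then show ?thesis
    unfolding SS_odd[OF a cos_param_facts(2,3)] cos_param_facts(4,5)
      Re_PhiS_cis[OF assms, where a = a and \<theta> = \<theta>, folded t_def p_def] .
qed

lemma CC_moment_cos_param:
  assumes "j \<le> k + l"
  shows "p * (CC (2*k+1) (2*l+1) a t / rho (2*k+1) (2*l+1) a t * t ^ j)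
    = sqrt a / 2 * Re (PhiC k l a j (cis \<theta>))"
proof -
  have "p * (p / s * x / (2 / s^2 * d) * t ^ j) = s / 2 * (t^j * p^2 * x / d)" if "s > 0"
    for x d s :: real
    using that by (cases "d = 0") (simp_all add: field_simps power2_eq_square)
  from this[of "sqrt a"]
  have "p * (p / sqrt a * x / (2 / a * d) * t ^ j) = sqrt a / 2 * (t^j * p^2 * x / d)"
    for x d :: real
    using a by simp
  then show ?thesis
    unfolding CC_odd[OF a cos_param_facts(2,3)] cos_param_facts(4,5)
      Re_PhiC_cis[OF assms, where a = a and \<theta> = \<theta>, folded t_def p_def] .
qed

lemma SS_inverse_moment_cos_param:
  assumes "t \<noteq> 0"
  shows "p * (SS (2*k+1) (2*l+1) a t / rho (2*k+1) (2*l+1) a t * (1 / t)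
      / sqrt ((1 - t) * (1 + t / a)))
    = a / 2 * Re (PhiM k l a (cis \<theta>))"
proof -
  have "p * (t / sqrt a * y / (2 / a * d) * (1 / t) / (p / sqrt a)) = a / 2 * (y / d)"
    for y d :: real
    using cos_param_facts(1) a assms by (simp add: field_simps)
  then show ?thesis
    unfolding SS_odd[OF a cos_param_facts(2,3)] cos_param_facts(4,5)
      Re_PhiM_cis[OF a, where \<theta> = \<theta>, folded t_def p_def] .
qed

end

context
  fixes k l :: nat and a :: real
  assumes a: "a > 0"
begin

lemma cos_param_interval: "{(1 - a) / 2 - (1 + a) / 2..(1 - a) / 2 + (1 + a) / 2} = {- a..1}"
  by (simp add: field_simps)

lemma has_integral_SS_moment:
  assumes "j \<le> k + l"
  shows "((\<lambda>t. SS (2*k+1) (2*l+1) a t / rho (2*k+1) (2*l+1) a t * t ^ j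
      / sqrt ((1 - t) * (1 + t / a))) has_integral 0) {- a..1}"
proof -
  define f where "f = (\<lambda>t. SS (2*k+1) (2*l+1) a t / rho (2*k+1) (2*l+1) a t * t ^ j
    / sqrt ((1 - t) * (1 + t / a)))"
  have "(f has_integral pi * Re (of_real (a / 2) * PhiS k l a j 0)) {- a..1}"
    unfolding cos_param_interval[symmetric]
  proof (rule has_integral_cos_substitution_holomorphic)
    show "(\<lambda>w. of_real (a / 2) * PhiS k l a j w) holomorphic_on cball 0 1"
      unfolding PhiS_def using a Q_hom_nonzero_cball by (intro holomorphic_intros) auto
    show "of_real (a / 2) * PhiS k l a j (cnj w) = cnj (of_real (a / 2) * PhiS k l a j w)" for w
      by (simp add: PhiS_def cnj_tau cnj_Q_hom)
    show "(1 + a) / 2 * sin \<theta> * f ((1 - a) / 2 + (1 + a) / 2 * cos \<theta>)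
      = Re (of_real (a / 2) * PhiS k l a j (cis \<theta>))" if "\<theta> \<in> {0<..<pi}" for \<theta>
      using SS_moment_cos_param[OF a that, of j k l] assms by (simp add: f_def)
  qed (use a in auto)
  moreover have "PhiS k l a j 0 = 0"
    using assms by (simp add: PhiS_def)
  ultimately show ?thesis
    by (simp add: f_def)
qed

lemma has_integral_CC_moment:
  assumes "j < k + l"
  shows "((\<lambda>t. CC (2*k+1) (2*l+1) a t / rho (2*k+1) (2*l+1) a t * t ^ j) has_integral 0) {- a..1}"
proof -
  define f where "f = (\<lambda>t. CC (2*k+1) (2*l+1) a t / rho (2*k+1) (2*l+1) a t * t ^ j)"
  have "(f has_integral pi * Re (of_real (sqrt a / 2) * PhiC k l a j 0)) {- a..1}"
    unfolding cos_param_interval[symmetric]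
  proof (rule has_integral_cos_substitution_holomorphic)
    show "(\<lambda>w. of_real (sqrt a / 2) * PhiC k l a j w) holomorphic_on cball 0 1"
      unfolding PhiC_def using a Q_hom_nonzero_cball by (intro holomorphic_intros) auto
    show "of_real (sqrt a / 2) * PhiC k l a j (cnj w) = cnj (of_real (sqrt a / 2) * PhiC k l a j w)"
      for w
      by (simp add: PhiC_def cnj_tau cnj_Q_hom)
    show "(1 + a) / 2 * sin \<theta> * f ((1 - a) / 2 + (1 + a) / 2 * cos \<theta>)
      = Re (of_real (sqrt a / 2) * PhiC k l a j (cis \<theta>))" if "\<theta> \<in> {0<..<pi}" for \<theta>
      using CC_moment_cos_param[OF a that, of j k l] assms by (simp add: f_def)
  qed (use a in auto)
  moreover have "PhiC k l a j 0 = 0"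
    using assms by (simp add: PhiC_def)
  ultimately show ?thesis
    by (simp add: f_def)
qed

lemma has_integral_SS_inverse_moment:
  "((\<lambda>t. SS (2*k+1) (2*l+1) a t / rho (2*k+1) (2*l+1) a t * (1 / t)
      / sqrt ((1 - t) * (1 + t / a))) has_integral pi / 2) {- a..1}"
proof -
  define f where "f = (\<lambda>t. SS (2*k+1) (2*l+1) a t / rho (2*k+1) (2*l+1) a t * (1 / t)
    / sqrt ((1 - t) * (1 + t / a)))"
  have "(f has_integral pi * Re (of_real (a / 2) * PhiM k l a 0)) {- a..1}"
    unfolding cos_param_interval[symmetric]
  proof (rule has_integral_cos_substitution_holomorphic[where T = "{0}"])
    show "(\<lambda>w. of_real (a / 2) * PhiM k l a w) holomorphic_on cball 0 1"
      unfolding PhiM_def using a Q_hom_nonzero_cball by (intro holomorphic_intros) auto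
    show "of_real (a / 2) * PhiM k l a (cnj w) = cnj (of_real (a / 2) * PhiM k l a w)" for w
      by (simp add: PhiM_def cnj_M_hom cnj_Q_hom)
    show "(1 + a) / 2 * sin \<theta> * f ((1 - a) / 2 + (1 + a) / 2 * cos \<theta>)
      = Re (of_real (a / 2) * PhiM k l a (cis \<theta>))"
      if "\<theta> \<in> {0<..<pi}" "(1 - a) / 2 + (1 + a) / 2 * cos \<theta> \<notin> {0}" for \<theta>
      using SS_inverse_moment_cos_param[OF a that(1), of k l] that(2) by (simp add: f_def)
  qed (use a in auto)
  moreover have "PhiM k l a 0 = 1 / of_real a"
    using Q_hom_zero_nonzero[OF a] a by (simp add: PhiM_def M_hom_zero)
  ultimately show ?thesis
    using a by (simp add: f_def)
qed

end

theorem mainTheorem3: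
  fixes n m :: nat and a :: real
  assumes "n > 0" "m > 0" "odd n" "odd m" "a > 0"
  shows "((\<lambda>t. SS n m a t / rho n m a t * (1 / t) / sqrt ((1 - t) * (1 + t / a)))
            has_integral (pi / 2)) {-a..1}
       \<and> (\<forall>j::nat. real j \<le> (real m + real n - 2) / 2 \<longrightarrow>
          ((\<lambda>t. SS n m a t / rho n m a t * t ^ j / sqrt ((1 - t) * (1 + t / a)))
            has_integral 0) {-a..1})
       \<and> (\<forall>j::nat. real j \<le> (real m + real n - 4) / 2 \<longrightarrow>
          ((\<lambda>t. CC n m a t / rho n m a t * t ^ j) has_integral 0) {-a..1})"
proof -
  obtain k l where n: "n = 2*k+1" and m: "m = 2*l+1"
    using \<open>odd n\<close> \<open>odd m\<close> by (meson oddE)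
  have "j \<le> k + l" if "real j \<le> (real m + real n - 2) / 2" for j :: nat
    using that by (simp add: n m)
  moreover have "j < k + l" if "real j \<le> (real m + real n - 4) / 2" for j :: nat
    using that by (simp add: n m)
  ultimately show ?thesis
    using has_integral_SS_inverse_moment has_integral_SS_moment has_integral_CC_moment \<open>a > 0\<close>
    by (simp add: n m)
qed

end
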